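(* In the standard LLP setup, fix $N\ge1$. If there is no starting error in $L(G,\gamma^N_{cons})$, i.e. $f^N_{cons}(\epsilon)\neq\emptyset$, then there is no run-time error in $L(G,\gamma^N_{cons})$, i.e. $f^N_{cons}(s)\neq\emptyset$ for all $s\in L(G,\gamma^N_{cons})$.
   Context: Standard LLP setup. $\Sigma=\Sigma_c\,\dot\cup\,\Sigma_{uc}$ is a finite alphabet partitioned into controllable and uncontrollable events. The plant $G$ has generated language $L(G)$ and marked language $L_m(G)$ with $L(G)=\overline{L_m(G)}$ ($\overline{M}$ = set of prefixes of strings in $M$). The legal language $K\subseteq L_m(G)$ satisfies $K=\overline{K}\cap L_m(G)$. For a prefix-closed $L$, $M$ is controllable w.r.t. $L$ if $\overline{M}\Sigma_{uc}\cap L\subseteq\overline{M}$. For a language $L$ and $s\in\Sigma^*$: $L/s=\{t: st\in L\}$; $L|_N=\{t\in L:|t|\le N\}$; $\Sigma_{L(G)}(s)=\{\sigma\in\Sigma: s\sigma\in L(G)\}$. $M^{\uparrow/s|_N}$ is the supremal sublanguage of $M$ controllable w.r.t. $L(G)/s|_N$. Conservative attitude: $f^N_{cons}(s)=[K/s|_{N-1}]^{\uparrow/s|_N}$; control policy $\gamma^N_{cons}(s)=(\overline{f^N_{cons}(s)}\cap\Sigma)\cup(\Sigma_{uc}\cap\Sigma_{L(G)}(s))$. Closed-loop language $L(G,\gamma)$: $\epsilon\in L(G,\gamma)$, and $s\sigma\in L(G,\gamma)$ iff $s\in L(G,\gamma)$, $s\sigma\in L(G)$, $\sigma\in\gamma(s)$.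 A run-time error occurs at $s$ if $s\in L(G,\gamma^N)$ and $f^N(s)=\emptyset$; a starting error is a run-time error at $s=\epsilon$. *)

theory Defs
  imports Main
begin

text \<open>Strings over the event type 'a are lists; languages are sets of lists.
  The uncontrollable events form the set Suc_ev; controllable events are the rest.\<close>

definition pre :: "'a list set \<Rightarrow> 'a list set" where
  "pre M = {t. \<exists>u. t @ u \<in> M}"

definition quot :: "'a list set \<Rightarrow> 'a list \<Rightarrow> 'a list set" where
  "quot L s = {t. s @ t \<in> L}"

definition trunc :: "'a list set \<Rightarrow> nat \<Rightarrow> 'a list set" where
  "trunc L N = {t \<in> L. length t \<le> N}"

text \<open>M controllable w.r.t. (prefix-closed) L: pre M Sigma_uc \<inter> L \<subseteq> pre M.\<close>
definition controllable :: "'a set \<Rightarrow> 'a list set \<Rightarrow> 'a list set \<Rightarrow> bool" where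
  "controllable Suc_ev M L \<longleftrightarrow>
     (\<forall>t \<sigma>. t \<in> pre M \<and> \<sigma> \<in> Suc_ev \<and> t @ [\<sigma>] \<in> L \<longrightarrow> t @ [\<sigma>] \<in> pre M)"

definition supcon :: "'a set \<Rightarrow> 'a list set \<Rightarrow> 'a list set \<Rightarrow> 'a list set" where
  "supcon Suc_ev M L = \<Union>{M'. M' \<subseteq> M \<and> controllable Suc_ev M' L}"

text \<open>Conservative attitude: f^N_cons(s) = [K/s|_{N-1}]^{up/s|_N}, with L(G) = pre Lm.\<close>
definition f_cons :: "'a set \<Rightarrow> 'a list set \<Rightarrow> 'a list set \<Rightarrow> nat \<Rightarrow> 'a list \<Rightarrow> 'a list set" where
  "f_cons Suc_ev Lm K N s =
     supcon Suc_ev (trunc (quot K s) (N - 1)) (trunc (quot (pre Lm) s) N)"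

definition gamma_cons :: "'a set \<Rightarrow> 'a list set \<Rightarrow> 'a list set \<Rightarrow> nat \<Rightarrow> 'a list \<Rightarrow> 'a set" where
  "gamma_cons Suc_ev Lm K N s =
     {\<sigma>. [\<sigma>] \<in> pre (f_cons Suc_ev Lm K N s)} \<union> {\<sigma> \<in> Suc_ev. s @ [\<sigma>] \<in> pre Lm}"

inductive_set closed_loop :: "'a list set \<Rightarrow> ('a list \<Rightarrow> 'a set) \<Rightarrow> 'a list set"
  for L :: "'a list set" and \<gamma> :: "'a list \<Rightarrow> 'a set" where
  Nil: "[] \<in> closed_loop L \<gamma>"
| snoc: "s \<in> closed_loop L \<gamma> \<Longrightarrow> s @ [\<sigma>] \<in> L \<Longrightarrow> \<sigma> \<in> \<gamma> s \<Longrightarrow> s @ [\<sigma>] \<in> closed_loop L \<gamma>"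

end

theory Submission
  imports Defs
begin

text \<open>If \<open>M\<close> is a nonempty controllable sublanguage of \<open>K/s\<close> truncated at \<open>N - 1\<close> and
  \<open>\<sigma>\<close> is a first event of \<open>M\<close>, then the strings \<open>t\<close> with \<open>\<sigma> t \<in> M\<close> form a nonempty
  controllable sublanguage of \<open>K/s\<sigma>\<close> truncated at \<open>N - 1\<close>: stripping \<open>\<sigma>\<close> shortens
  every string, so the lookahead window of length \<open>N\<close> after \<open>s\<sigma>\<close> still covers all
  uncontrollable extensions. Every event enabled by the conservative policy is such a first
  event of \<open>f(s)\<close>, directly or, for uncontrollable events, by controllability. Induction
  along the closed-loop language then propagates nonemptiness from the empty string.\<close>

lemma supcon_nonempty_iff:
  "supcon Suc_ev M L \<noteq> {} \<longleftrightarrow> (\<exists>M'. M' \<subseteq> M \<and> controllable Suc_ev M' L \<and> M' \<noteq> {})"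
  by (auto simp: supcon_def)

lemma Cons_in_pre_supcon_iff:
  "\<sigma> # u \<in> pre (supcon Suc_ev M L) \<longleftrightarrow>
     (\<exists>M'. M' \<subseteq> M \<and> controllable Suc_ev M' L \<and> \<sigma> # u \<in> pre M')"
  by (auto simp: supcon_def pre_def)

lemma controllable_uncontrollable_first_event:
  assumes "controllable Suc_ev M L" and "M \<noteq> {}"
    and "\<sigma> \<in> Suc_ev" and "[\<sigma>] \<in> L"
  shows "[\<sigma>] \<in> pre M"
proof -
  have "[] \<in> pre M" using \<open>M \<noteq> {}\<close> by (auto simp: pre_def)
  then show ?thesis using assms unfolding controllable_def by fastforce
qed

lemma controllable_derivative:
  assumes ctr: "controllable Suc_ev M (trunc (quot L s) N)"
    and short: "\<And>t. t \<in> M \<Longrightarrow> length t \<le> N - 1"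
  shows "controllable Suc_ev {t. \<sigma> # t \<in> M} (trunc (quot L (s @ [\<sigma>])) N)"
  unfolding controllable_def
proof (intro allI impI, elim conjE)
  fix t \<tau>
  assume t: "t \<in> pre {t. \<sigma> # t \<in> M}" and \<tau>: "\<tau> \<in> Suc_ev"
    and ext: "t @ [\<tau>] \<in> trunc (quot L (s @ [\<sigma>])) N"
  then obtain v where v: "\<sigma> # t @ v \<in> M" by (auto simp: pre_def)
  then have "length (\<sigma> # t) \<le> N - 1" using short by fastforce
  then have "(\<sigma> # t) @ [\<tau>] \<in> trunc (quot L s) N"
    using ext by (auto simp: trunc_def quot_def)
  moreover have "\<sigma> # t \<in> pre M" using v by (auto simp: pre_def)
  ultimately have "(\<sigma> # t) @ [\<tau>] \<in> pre M"
    using ctr \<tau> unfolding controllable_def by blast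
  then show "t @ [\<tau>] \<in> pre {t. \<sigma> # t \<in> M}" by (auto simp: pre_def)
qed

lemma f_cons_snoc_nonempty:
  assumes "[\<sigma>] \<in> pre (f_cons Suc_ev Lm K N s)"
  shows "f_cons Suc_ev Lm K N (s @ [\<sigma>]) \<noteq> {}"
proof -
  let ?A = "trunc (quot K s) (N - 1)"
  obtain M where M: "M \<subseteq> ?A" "controllable Suc_ev M (trunc (quot (pre Lm) s) N)"
      "[\<sigma>] \<in> pre M"
    using assms Cons_in_pre_supcon_iff[of \<sigma> "[]"] unfolding f_cons_def by blast
  let ?M' = "{t. \<sigma> # t \<in> M}"
  have "?M' \<subseteq> trunc (quot K (s @ [\<sigma>])) (N - 1)"
    using M(1) by (auto simp: trunc_def quot_def)
  moreover have "controllable Suc_ev ?M' (trunc (quot (pre Lm) (s @ [\<sigma>])) N)"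
    using M(1,2) by (intro controllable_derivative) (auto simp: trunc_def)
  moreover have "?M' \<noteq> {}" using M(3) by (auto simp: pre_def)
  ultimately show ?thesis unfolding f_cons_def supcon_nonempty_iff by blast
qed

lemma gamma_cons_first_event:
  assumes "N \<ge> 1" and "f_cons Suc_ev Lm K N s \<noteq> {}"
    and "s @ [\<sigma>] \<in> pre Lm" and "\<sigma> \<in> gamma_cons Suc_ev Lm K N s"
  shows "[\<sigma>] \<in> pre (f_cons Suc_ev Lm K N s)"
proof (cases "\<sigma> \<in> Suc_ev")
  case True
  obtain M where M: "M \<subseteq> trunc (quot K s) (N - 1)"
      "controllable Suc_ev M (trunc (quot (pre Lm) s) N)" "M \<noteq> {}"
    using assms(2) unfolding f_cons_def supcon_nonempty_iff by blast
  have "[\<sigma>] \<in> trunc (quot (pre Lm) s) N"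
    using assms(1,3) by (auto simp: trunc_def quot_def)
  then have "[\<sigma>] \<in> pre M"
    by (rule controllable_uncontrollable_first_event[OF M(2,3) True])
  then show ?thesis
    using M(1,2) Cons_in_pre_supcon_iff[of \<sigma> "[]"] unfolding f_cons_def by blast
next
  case False
  then show ?thesis using assms(4) by (simp add: gamma_cons_def)
qed

theorem theorem6:
  fixes Suc_ev :: "'a set" and Lm K :: "'a list set" and N :: nat
  assumes "finite (UNIV :: 'a set)"
    and "N \<ge> 1"
    and "K \<subseteq> Lm"
    and "K = pre K \<inter> Lm"
    and "f_cons Suc_ev Lm K N [] \<noteq> {}"
  shows "\<forall>s \<in> closed_loop (pre Lm) (gamma_cons Suc_ev Lm K N). f_cons Suc_ev Lm K N s \<noteq> {}"
proof
  fix s assume "s \<in> closed_loop (pre Lm) (gamma_cons Suc_ev Lm K N)"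
  then show "f_cons Suc_ev Lm K N s \<noteq> {}"
  proof (induction rule: closed_loop.induct)
    case Nil
    show ?case using assms(5) .
  next
    case (snoc s \<sigma>)
    have "[\<sigma>] \<in> pre (f_cons Suc_ev Lm K N s)"
      using assms(2) snoc.IH snoc.hyps(2,3) by (rule gamma_cons_first_event)
    then show ?case by (rule f_cons_snoc_nonempty)
  qed
qed

end
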